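(* Let $n\ge1$, $k\in\{1,\ldots,n\}$, and let $f\in L^2([0,1]^n)$ be such that the derivative $D_{(k)}f$ of $f$ in the direction $(k)$ exists and is continuous and integrable on $\bigcup_{\pi\in S_n}[0,1]^n_\pi$. Then $$I(f,k)=\int_{[0,1]^n}h_k(\mathbf{x})\,D_{(k)}f(\mathbf{x})\,d\mathbf{x},$$ where $h_k(\mathbf{x})=(n+1)(n+2)\,(x_{(k+1)}-x_{(k)})(x_{(k)}-x_{(k-1)})$.
   Context: $L^2([0,1]^n)$ is the space of square integrable real functions on $[0,1]^n$ modulo equality almost everywhere. For $\mathbf{x}\in[0,1]^n$, $x_{(1)}\le\cdots\le x_{(n)}$ are its coordinates in ascending order, with $x_{(0)}=0$, $x_{(n+1)}=1$. The influence index is $I(f,k)=-(n+1)(n+2)\int_{[0,1]^n}f(\mathbf{x})\,\big(x_{(k+1)}-2x_{(k)}+x_{(k-1)}\big)\,d\mathbf{x}$. $S_n$ is the symmetric group on $\{1,\ldots,n\}$ and, for $\pi\in S_n$, $[0,1]^n_\pi=\{\mathbf{x}\in[0,1]^n: x_{\pi(1)}<\cdots<x_{\pi(n)}\}$. If for every $\pi\in S_n$ the partial derivative $D_{\pi(k)}(f|_{[0,1]^n_\pi})$ exists, the derivative of $f$ in the direction $(k)$ is the function $D_{(k)}f$ on $\bigcup_{\pi}[0,1]^n_\pi$ given by $D_{(k)}f(\mathbf{x})=D_{\pi(k)}f(\mathbf{x})$ for $\mathbf{x}\in[0,1]^n_\pi$. *)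

theory Defs
  imports "HOL-Analysis.Analysis" "HOL-Library.Multiset"
begin

text \<open>Points of [0,1]^n are vectors of type real^'n, with n = CARD('n).\<close>

definition unit_cube :: "(real^'n::finite) set" where
  "unit_cube = cbox 0 One"

definition ord_stat :: "real^'n::finite \<Rightarrow> nat \<Rightarrow> real" where
  "ord_stat x j =
     (if j = 0 then 0
      else if j > CARD('n) then 1
      else sorted_list_of_multiset (image_mset (\<lambda>i. x $ i) (mset_set UNIV)) ! (j - 1))"

definition influence :: "(real^'n::finite \<Rightarrow> real) \<Rightarrow> nat \<Rightarrow> real" where
  "influence f k =
     - (real CARD('n) + 1) * (real CARD('n) + 2) *
       integral unit_cube (\<lambda>x. f x * (ord_stat x (k + 1) - 2 * ord_stat x k + ord_stat x (k - 1)))"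

definition perms :: "(nat \<Rightarrow> 'n::finite) set" where
  "perms = {\<pi>. bij_betw \<pi> {1..CARD('n)} UNIV}"

definition perm_region :: "(nat \<Rightarrow> 'n::finite) \<Rightarrow> (real^'n) set" where
  "perm_region \<pi> = {x \<in> unit_cube.
      \<forall>i j. 1 \<le> i \<longrightarrow> i < j \<longrightarrow> j \<le> CARD('n) \<longrightarrow> x $ (\<pi> i) < x $ (\<pi> j)}"

definition union_regions :: "(real^'n::finite) set" where
  "union_regions = (\<Union>\<pi>\<in>perms. perm_region \<pi>)"

definition has_partial_within ::
    "(real^'n::finite \<Rightarrow> real) \<Rightarrow> (real^'n) set \<Rightarrow> 'n \<Rightarrow> real^'n \<Rightarrow> real \<Rightarrow> bool" where
  "has_partial_within f S i x d \<longleftrightarrow>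
     ((\<lambda>t. f (x + t *\<^sub>R axis i 1)) has_real_derivative d)
       (at 0 within {t. x + t *\<^sub>R axis i 1 \<in> S})"

definition dir_deriv_exists :: "(real^'n::finite \<Rightarrow> real) \<Rightarrow> nat \<Rightarrow> bool" where
  "dir_deriv_exists f k \<longleftrightarrow>
     (\<forall>\<pi>\<in>perms. \<forall>x\<in>perm_region \<pi>. \<exists>d. has_partial_within f (perm_region \<pi>) (\<pi> k) x d)"

definition dir_deriv :: "(real^'n::finite \<Rightarrow> real) \<Rightarrow> nat \<Rightarrow> real^'n \<Rightarrow> real" where
  "dir_deriv f k x =
     (THE d. \<exists>\<pi>\<in>perms. x \<in> perm_region \<pi> \<and> has_partial_within f (perm_region \<pi>) (\<pi> k) x d)"

definition h_weight :: "nat \<Rightarrow> real^'n::finite \<Rightarrow> real" where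
  "h_weight k x = (real CARD('n) + 1) * (real CARD('n) + 2) *
     (ord_stat x (k + 1) - ord_stat x k) * (ord_stat x k - ord_stat x (k - 1))"

end

theory Submission
  imports Defs
begin

text \<open>Up to a null set the cube is the disjoint union of the regions \<open>[0,1]^n_\<pi>\<close>. On the region
  of \<open>\<pi>\<close> the order statistics \<open>x_(k-1), x_(k), x_(k+1)\<close> are \<open>a = x_\<pi>(k-1)\<close>, \<open>t = x_\<pi>(k)\<close>,
  \<open>b = x_\<pi>(k+1)\<close> (with \<open>a = 0\<close> if \<open>k = 1\<close> and \<open>b = 1\<close> if \<open>k = n\<close>), so up to the factor
  \<open>(n+1)(n+2)\<close> the weight \<open>h_k\<close> is \<open>(b - t)(t - a)\<close>, whose derivative in \<open>t\<close> is the weight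
  \<open>b - 2t + a\<close> of \<open>I(f,k)\<close>. By Fubini it suffices to integrate along lines parallel to the
  \<open>\<pi>(k)\<close>-th axis. Such a line meets the region in an interval with end points \<open>a\<close> and \<open>b\<close>,
  where \<open>h_k\<close> vanishes, so integration by parts along it has no boundary terms.\<close>

lemma absolutely_integrable_continuous_mult:
  fixes w g :: "'a::euclidean_space \<Rightarrow> real"
  assumes "continuous_on K w" "compact K" "S \<subseteq> K" "S \<in> sets lebesgue"
    and "g absolutely_integrable_on S"
  shows "(\<lambda>x. w x * g x) absolutely_integrable_on S"
proof (rule absolutely_integrable_bounded_measurable_product[OF bilinear_times _ assms(4) _ assms(5)])
  show "w \<in> borel_measurable (lebesgue_on S)"
    using assms by (intro continuous_imp_measurable_on_sets_lebesgue) (auto intro: continuous_on_subset)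
  show "bounded (w ` S)"
    using assms by (meson bounded_subset compact_continuous_image compact_imp_bounded image_mono)
qed

lemma absolutely_integrable_if_square_integrable:
  fixes f :: "'a::euclidean_space \<Rightarrow> real"
  assumes S: "S \<in> lmeasurable" and "f measurable_on S" and "(\<lambda>x. (f x)\<^sup>2) integrable_on S"
  shows "f absolutely_integrable_on S"
proof (rule measurable_bounded_by_integrable_imp_absolutely_integrable)
  show "S \<in> sets lebesgue" using S by auto
  then show "f \<in> borel_measurable (lebesgue_on S)"
    using assms(2) measurable_on_iff_borel_measurable by blast
  show "(\<lambda>x. 1 + (f x)\<^sup>2) integrable_on S"
    using S assms(3) by (intro integrable_add integrable_on_const)
  show "norm (f x) \<le> 1 + (f x)\<^sup>2" for x
    using zero_le_power2[of "\<bar>f x\<bar> - 1"] by (simp add: power2_eq_square algebra_simps)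
qed

lemma lebesgue_integral_AE_eq_borel:
  fixes \<phi> h :: "'a::euclidean_space \<Rightarrow> real"
  assumes h: "h \<in> borel_measurable borel" "integrable lborel h" and ae: "AE x in lborel. \<phi> x = h x"
  shows "integrable lebesgue \<phi>" and "integral\<^sup>L lebesgue \<phi> = integral\<^sup>L lborel h"
proof -
  have h_leb: "h \<in> borel_measurable lebesgue" "integrable lebesgue h"
    using h by (auto simp: integrable_completion intro: measurable_completion)
  have ae_leb: "AE x in lebesgue. h x = \<phi> x"
    using AE_completion[OF ae] by (auto elim: eventually_mono)
  have "\<phi> \<in> borel_measurable lebesgue"
    by (rule borel_measurable_AE[OF h_leb(1) ae_leb])
  then show "integrable lebesgue \<phi>"
    using integrable_cong_AE_imp[OF h_leb(2) _ ae_leb] by blast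
  have "integral\<^sup>L lebesgue \<phi> = integral\<^sup>L lebesgue h"
    using ae_leb by (intro integral_cong_AE) (auto simp: h_leb(1) \<open>\<phi> \<in> borel_measurable lebesgue\<close>)
  also have "\<dots> = integral\<^sup>L lborel h" using h by (simp add: integral_completion)
  finally show "integral\<^sup>L lebesgue \<phi> = integral\<^sup>L lborel h" .
qed

section \<open>Integration along lines parallel to a coordinate axis\<close>

definition vec_upd :: "'a^'n \<Rightarrow> 'n \<Rightarrow> 'a \<Rightarrow> 'a^'n" where
  "vec_upd x j t = (\<chi> i. if i = j then t else x $ i)"

lemma vec_upd_nth [simp]: "vec_upd x j t $ i = (if i = j then t else x $ i)"
  by (simp add: vec_upd_def)

lemma vec_upd_add_axis: "vec_upd y j t + s *\<^sub>R axis j 1 = vec_upd y j (t + s)"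
  by (simp add: vec_eq_iff axis_def)

lemma continuous_on_vec_upd: "continuous_on UNIV (\<lambda>p::(real^'n) \<times> real. vec_upd (fst p) j (snd p))"
  unfolding vec_upd_def
proof (rule continuous_on_vec_lambda)
  fix i
  show "continuous_on UNIV (\<lambda>p::(real^'n) \<times> real. if i = j then snd p else fst p $ i)"
    by (cases "i = j") (auto intro!: continuous_intros)
qed

lemma borel_measurable_vec_upd [measurable]:
  fixes f :: "'a \<Rightarrow> real^'n" and g :: "'a \<Rightarrow> real"
  assumes [measurable]: "f \<in> borel_measurable M" "g \<in> borel_measurable M"
  shows "(\<lambda>x. vec_upd (f x) j (g x)) \<in> borel_measurable M"
proof -
  have h: "(\<lambda>p. vec_upd (fst p) j (snd p)) \<in> borel_measurable (borel \<Otimes>\<^sub>M (borel :: real measure))"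
    using borel_measurable_continuous_onI[OF continuous_on_vec_upd, of j] by (simp add: borel_prod)
  have "(\<lambda>x. (f x, g x)) \<in> M \<rightarrow>\<^sub>M borel \<Otimes>\<^sub>M borel" using assms by measurable
  from measurable_compose[OF this h] show ?thesis by simp
qed

lemma Basis_vec_eq_range_axis: "(Basis :: (real^'n) set) = range (\<lambda>i. axis i 1)"
  and inj_axis_one: "inj (\<lambda>i::'n. axis i (1::real))"
  by (auto simp: Basis_vec_def axis_eq_axis intro!: injI)

lemma sum_Basis_vec: "(\<Sum>b\<in>(Basis :: (real^'n) set). g b) = (\<Sum>i\<in>UNIV. g (axis i 1))"
  and prod_Basis_vec: "(\<Prod>b\<in>(Basis :: (real^'n) set). g b) = (\<Prod>i\<in>UNIV. g (axis i 1))"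
  by (simp_all add: Basis_vec_eq_range_axis sum.reindex prod.reindex inj_axis_one)

lemma sum_Basis_vec_nth [simp]: "(\<Sum>b\<in>(Basis :: (real^'n) set). b $ i) = 1"
  by (simp add: sum_Basis_vec axis_def)

lemma emeasure_lborel_box_vec:
  fixes l u :: "real^'n"
  assumes "\<And>i. l $ i \<le> u $ i"
  shows "emeasure lborel (box l u) = (\<Prod>i\<in>UNIV. u $ i - l $ i)"
proof -
  have "\<forall>b\<in>Basis. l \<bullet> b \<le> u \<bullet> b" using assms by (auto simp: Basis_vec_eq_range_axis inner_axis)
  then show ?thesis by (simp add: prod_Basis_vec inner_axis)
qed

text \<open>Lebesgue measure on the hyperplane \<open>x_j = 0\<close>, as the projection of the slab \<open>0 < x_j < 1\<close>.\<close>

definition hyperplane_measure :: "'n \<Rightarrow> (real^'n::finite) measure" where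
  "hyperplane_measure j =
     distr (density lborel (indicator {x. 0 < x $ j \<and> x $ j < 1})) borel (\<lambda>x. vec_upd x j 0)"

lemma sets_hyperplane_measure [simp, measurable_cong]: "sets (hyperplane_measure j) = sets borel"
  and space_hyperplane_measure [simp]: "space (hyperplane_measure j) = UNIV"
  by (simp_all add: hyperplane_measure_def)

lemma emeasure_hyperplane_measure:
  fixes j :: "'n::finite"
  assumes "A \<in> sets borel"
  shows "emeasure (hyperplane_measure j) A =
    emeasure lborel ({x. 0 < x $ j \<and> x $ j < 1} \<inter> (\<lambda>x. vec_upd x j 0) -` A)"
proof -
  have "(\<lambda>x. vec_upd x j 0) -` A \<in> sets borel"
    using measurable_sets[of "\<lambda>x. vec_upd x j 0" borel borel A] assms by simp
  moreover have "{x::real^'n. 0 < x $ j \<and> x $ j < 1} \<in> sets borel" by measurable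
  ultimately show ?thesis
    unfolding hyperplane_measure_def using assms
    by (subst emeasure_distr) (simp_all add: emeasure_restricted)
qed

lemma sigma_finite_hyperplane_measure: "sigma_finite_measure (hyperplane_measure (j::'n::finite))"
proof
  let ?A = "range (\<lambda>m::nat. box (- real m *\<^sub>R One) (real m *\<^sub>R (One::real^'n)))"
  show "\<exists>A. countable A \<and> A \<subseteq> sets (hyperplane_measure j) \<and> \<Union> A = space (hyperplane_measure j) \<and>
      (\<forall>a\<in>A. emeasure (hyperplane_measure j) a \<noteq> \<infinity>)"
  proof (intro exI[of _ ?A] conjI ballI)
    show "countable ?A" "?A \<subseteq> sets (hyperplane_measure j)" by auto
    show "\<Union> ?A = space (hyperplane_measure j)"
      using UN_box_eq_UNIV[where 'a="real^'n"] by simp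
    fix a assume "a \<in> ?A"
    then obtain m where a: "a = box (- real m *\<^sub>R One) (real m *\<^sub>R (One::real^'n))" by auto
    have "{x. 0 < x $ j \<and> x $ j < 1} \<inter> (\<lambda>x. vec_upd x j 0) -` a
        \<subseteq> box (- (real m + 1) *\<^sub>R One) ((real m + 1) *\<^sub>R One)" (is "?S \<subseteq> ?box")
    proof
      fix x assume x: "x \<in> ?S"
      show "x \<in> ?box" unfolding mem_box_cart
      proof
        fix i show "(- (real m + 1) *\<^sub>R One) $ i < x $ i \<and> x $ i < ((real m + 1) *\<^sub>R (One::real^'n)) $ i"
          using x by (cases "i = j") (auto simp: a mem_box_cart dest!: spec[of _ i])
      qed
    qed
    then have "emeasure lborel ?S \<le> emeasure lborel ?box"
      by (intro emeasure_mono) auto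
    then have "emeasure lborel ?S < \<infinity>"
      using emeasure_lborel_box_finite order.strict_trans1 by blast
    then show "emeasure (hyperplane_measure j) a \<noteq> \<infinity>"
      by (simp add: a emeasure_hyperplane_measure)
  qed
qed

lemma lborel_eq_distr_hyperplane_measure:
  "lborel = distr (hyperplane_measure (j::'n::finite) \<Otimes>\<^sub>M lborel) borel (\<lambda>p. vec_upd (fst p) j (snd p))"
proof (rule lborel_eqI)
  let ?line = "\<lambda>p. vec_upd (fst p) j (snd p)"
  fix l u :: "real^'n"
  assume "\<And>b. b \<in> Basis \<Longrightarrow> l \<bullet> b \<le> u \<bullet> b"
  then have lu: "l $ i \<le> u $ i" for i
    by (metis Basis_vec_eq_range_axis cart_eq_inner_axis rangeI)
  define B where "B = (\<lambda>y. vec_upd y j 0) -` box (vec_upd l j (-1)) (vec_upd u j 1)"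
  have "(\<lambda>y::real^'n. vec_upd y j 0) \<in> borel_measurable borel" by measurable
  from measurable_sets[OF this, of "box (vec_upd l j (-1)) (vec_upd u j 1)"]
  have B: "B \<in> sets borel" by (simp add: B_def)
  have "{x. 0 < x $ j \<and> x $ j < 1} \<inter> (\<lambda>x. vec_upd x j 0) -` B = box (vec_upd l j 0) (vec_upd u j 1)"
    by (auto simp: B_def mem_box_cart split: if_splits)
  then have "emeasure (hyperplane_measure j) B = (\<Prod>i\<in>UNIV. if i = j then 1 else u $ i - l $ i)"
    using B lu by (simp add: emeasure_hyperplane_measure emeasure_lborel_box_vec if_distrib cong: if_cong)
  moreover have "?line -` box l u \<inter> space (hyperplane_measure j \<Otimes>\<^sub>M lborel) = B \<times> {l $ j <..< u $ j}"
    by (auto simp: B_def mem_box_cart space_pair_measure split: if_splits)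
  ultimately have "emeasure (distr (hyperplane_measure j \<Otimes>\<^sub>M lborel) borel ?line) (box l u)
      = (\<Prod>i\<in>UNIV. if i = j then 1 else u $ i - l $ i) * (u $ j - l $ j)"
    using B lu by (simp add: emeasure_distr lborel.emeasure_pair_measure_Times ennreal_mult' prod_nonneg)
  also have "\<dots> = (\<Prod>b\<in>Basis. (u - l) \<bullet> b)"
    by (simp add: prod_Basis_vec inner_axis prod.If_cases Compl_eq_Diff_UNIV prod.remove[of UNIV j] mult.commute)
  finally show "emeasure (distr (hyperplane_measure j \<Otimes>\<^sub>M lborel) borel ?line) (box l u)
      = (\<Prod>b\<in>Basis. (u - l) \<bullet> b)" .
qed simp

lemma integral_lborel_along_coordinate_lines:
  fixes g :: "real^'n::finite \<Rightarrow> real"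
  assumes [measurable]: "g \<in> borel_measurable borel" and "integrable lborel g"
  shows "AE y in hyperplane_measure j. integrable lborel (\<lambda>t. g (vec_upd y j t))"
    and "integrable (hyperplane_measure j) (\<lambda>y. \<integral>t. g (vec_upd y j t) \<partial>lborel)"
    and "integral\<^sup>L lborel g = (\<integral>y. (\<integral>t. g (vec_upd y j t) \<partial>lborel) \<partial>hyperplane_measure j)"
proof -
  interpret sigma_finite_measure "hyperplane_measure j" by (rule sigma_finite_hyperplane_measure)
  interpret pair_sigma_finite "hyperplane_measure j" lborel ..
  have int: "integrable (hyperplane_measure j \<Otimes>\<^sub>M lborel) (\<lambda>(y, t). g (vec_upd y j t))"
    using assms(2) by (subst (asm) lborel_eq_distr_hyperplane_measure[of j])
      (simp add: integrable_distr_eq case_prod_beta')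
  show "AE y in hyperplane_measure j. integrable lborel (\<lambda>t. g (vec_upd y j t))"
    using AE_integrable_fst[OF int] by simp
  show "integrable (hyperplane_measure j) (\<lambda>y. \<integral>t. g (vec_upd y j t) \<partial>lborel)"
    using integrable_fst[OF int] by simp
  show "integral\<^sup>L lborel g = (\<integral>y. (\<integral>t. g (vec_upd y j t) \<partial>lborel) \<partial>hyperplane_measure j)"
    using integral_fst[OF int]
    by (subst lborel_eq_distr_hyperplane_measure[of j]) (simp add: integral_distr case_prod_beta')
qed

lemma AE_coordinate_lines_avoid_null_set:
  fixes Z :: "(real^'n::finite) set"
  assumes "Z \<in> null_sets lborel"
  shows "AE y in hyperplane_measure j. AE t in lborel. vec_upd y j t \<notin> Z"
proof -
  interpret sigma_finite_measure "hyperplane_measure j" by (rule sigma_finite_hyperplane_measure)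
  interpret pair_sigma_finite "hyperplane_measure j" lborel ..
  let ?line = "\<lambda>p. vec_upd (fst p) j (snd p)"
  have Z: "Z \<in> sets borel" "emeasure lborel Z = 0" using assms by auto
  have line: "?line \<in> hyperplane_measure j \<Otimes>\<^sub>M lborel \<rightarrow>\<^sub>M borel" by measurable
  have "emeasure (distr (hyperplane_measure j \<Otimes>\<^sub>M lborel) borel ?line) Z = 0"
    using Z(2) by (simp flip: lborel_eq_distr_hyperplane_measure)
  then have "?line -` Z \<inter> space (hyperplane_measure j \<Otimes>\<^sub>M lborel) \<in> null_sets (hyperplane_measure j \<Otimes>\<^sub>M lborel)"
    using emeasure_distr[OF line Z(1)] by (intro null_setsI measurable_sets[OF line Z(1)]) simp
  then have "AE p in hyperplane_measure j \<Otimes>\<^sub>M lborel. ?line p \<notin> Z"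
    by (rule AE_I') auto
  then show ?thesis using AE_pair by fastforce
qed

text \<open>The section integral itself need not be measurable on the hyperplane; \<open>G\<close> is the section
  integral of a Borel representative of \<open>g\<close>.\<close>

lemma integral_along_coordinate_lines:
  fixes g :: "real^'n::finite \<Rightarrow> real"
  assumes "g absolutely_integrable_on S"
  obtains G where "integrable (hyperplane_measure j) G"
    and "integral S g = integral\<^sup>L (hyperplane_measure j) G"
    and "AE y in hyperplane_measure j.
      (\<lambda>t. g (vec_upd y j t)) absolutely_integrable_on {t. vec_upd y j t \<in> S} \<and>
      G y = integral {t. vec_upd y j t \<in> S} (\<lambda>t. g (vec_upd y j t))"
proof -
  define gS where "gS = (\<lambda>x. indicator S x * g x)"
  have gS: "integrable lebesgue gS" using assms by (simp add: set_integrable_def gS_def)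
  then obtain g0 where g0 [measurable]: "g0 \<in> borel_measurable borel" and ae: "AE x in lborel. gS x = g0 x"
    using completion_ex_borel_measurable_real[of gS lborel] by auto
  have "integrable lebesgue g0"
    using gS ae by (intro integrable_cong_AE_imp[OF gS]) (auto intro: AE_completion measurable_completion)
  then have g0_int: "integrable lborel g0" by (simp add: integrable_completion)
  have "integral S g = integral\<^sup>L lebesgue gS"
    using set_lebesgue_integral_eq_integral(2)[OF assms] by (simp add: set_lebesgue_integral_def gS_def)
  also have "\<dots> = integral\<^sup>L lborel g0"
    by (rule lebesgue_integral_AE_eq_borel(2)[OF g0 g0_int ae])
  finally have int_eq: "integral S g = integral\<^sup>L lborel g0" .
  obtain Z where Z: "Z \<in> null_sets lborel" "{x. gS x \<noteq> g0 x} \<subseteq> Z"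
    using ae unfolding eventually_ae_filter by auto
  define G where "G = (\<lambda>y. \<integral>t. g0 (vec_upd y j t) \<partial>lborel)"
  have "AE y in hyperplane_measure j.
      (\<lambda>t. g (vec_upd y j t)) absolutely_integrable_on {t. vec_upd y j t \<in> S} \<and>
      G y = integral {t. vec_upd y j t \<in> S} (\<lambda>t. g (vec_upd y j t))"
    using integral_lborel_along_coordinate_lines(1)[OF g0 g0_int, of j]
      AE_coordinate_lines_avoid_null_set[OF Z(1), of j]
  proof eventually_elim
    case (elim y)
    have gS_line: "gS (vec_upd y j t) = indicator {t. vec_upd y j t \<in> S} t * g (vec_upd y j t)" for t
      by (simp add: gS_def indicator_def)
    have "AE t in lborel. gS (vec_upd y j t) = g0 (vec_upd y j t)"
      using elim(2) by eventually_elim (use Z(2) in auto)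
    note line = lebesgue_integral_AE_eq_borel[OF _ elim(1) this]
    then have abs_int: "(\<lambda>t. g (vec_upd y j t)) absolutely_integrable_on {t. vec_upd y j t \<in> S}"
      by (simp add: set_integrable_def gS_line)
    moreover have "integral {t. vec_upd y j t \<in> S} (\<lambda>t. g (vec_upd y j t)) = G y"
      using set_lebesgue_integral_eq_integral(2)[OF abs_int] line
      by (simp add: set_lebesgue_integral_def gS_line G_def)
    ultimately show ?case by simp
  qed
  moreover have "integrable (hyperplane_measure j) G" "integral S g = integral\<^sup>L (hyperplane_measure j) G"
    using integral_lborel_along_coordinate_lines(2,3)[OF g0 g0_int, of j] int_eq by (simp_all add: G_def)
  ultimately show ?thesis using that by blast
qed

lemma AE_absolutely_integrable_on_coordinate_lines:
  fixes g :: "real^'n::finite \<Rightarrow> real"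
  assumes "g absolutely_integrable_on S"
  shows "AE y in hyperplane_measure j. (\<lambda>t. g (vec_upd y j t)) absolutely_integrable_on {t. vec_upd y j t \<in> S}"
proof -
  obtain G where "AE y in hyperplane_measure j.
      (\<lambda>t. g (vec_upd y j t)) absolutely_integrable_on {t. vec_upd y j t \<in> S} \<and>
      G y = integral {t. vec_upd y j t \<in> S} (\<lambda>t. g (vec_upd y j t))"
    by (rule integral_along_coordinate_lines[OF assms])
  then show ?thesis by (rule eventually_mono) simp
qed

section \<open>Integration by parts against a weight vanishing at both end points\<close>

lemma bounded_antiderivative_on_interval:
  fixes \<phi> \<psi> :: "real \<Rightarrow> real"
  assumes deriv: "\<And>t. t \<in> {a<..<b} \<Longrightarrow> (\<phi> has_real_derivative \<psi> t) (at t)"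
    and \<psi>: "\<psi> absolutely_integrable_on {a..b}"
  obtains M where "\<And>t. t \<in> {a<..<b} \<Longrightarrow> \<bar>\<phi> t\<bar> \<le> M"
proof -
  define K where "K = integral {a..b} (\<lambda>t. \<bar>\<psi> t\<bar>)"
  have oscillation: "\<bar>\<phi> v - \<phi> u\<bar> \<le> K" if "u \<in> {a<..<b}" "v \<in> {a<..<b}" "u \<le> v" for u v
  proof -
    have sub: "{u..v} \<subseteq> {a..b}" using that by auto
    have "(\<psi> has_integral (\<phi> v - \<phi> u)) {u..v}"
      using that deriv
      by (intro fundamental_theorem_of_calculus)
        (auto simp: has_real_derivative_iff_has_vector_derivative[symmetric] intro: has_field_derivative_at_within)
    then have "\<bar>\<phi> v - \<phi> u\<bar> = \<bar>integral {u..v} \<psi>\<bar>" by (simp add: integral_unique)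
    also have "\<dots> \<le> integral {u..v} (\<lambda>t. \<bar>\<psi> t\<bar>)"
      using absolutely_integrable_on_subinterval[OF \<psi> sub] integral_norm_bound_integral[of \<psi> "{u..v}"]
      by (auto simp: absolutely_integrable_on_def)
    also have "\<dots> \<le> K"
      unfolding K_def using \<psi> absolutely_integrable_on_subinterval[OF \<psi> sub] sub
      by (intro integral_subset_le) (auto simp: absolutely_integrable_on_def)
    finally show ?thesis .
  qed
  show ?thesis
  proof (cases "a < b")
    case True
    define m where "m = (a + b) / 2"
    have m: "m \<in> {a<..<b}" using True by (simp add: m_def)
    show ?thesis
    proof (rule that[of "\<bar>\<phi> m\<bar> + K"])
      fix t assume "t \<in> {a<..<b}"
      then show "\<bar>\<phi> t\<bar> \<le> \<bar>\<phi> m\<bar> + K"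
        using oscillation[OF m] oscillation[of t m] m by (cases "m \<le> t") force+
    qed
  qed (use that in auto)
qed

lemma integral_by_parts_quadratic_weight:
  fixes \<phi> \<psi> :: "real \<Rightarrow> real"
  assumes ab: "a < b" and S: "{a<..<b} \<subseteq> S" "S \<subseteq> {a..b}"
    and deriv: "\<And>t. t \<in> {a<..<b} \<Longrightarrow> (\<phi> has_real_derivative \<psi> t) (at t)"
    and \<psi>: "\<psi> absolutely_integrable_on S"
  shows "integral S (\<lambda>t. (b - t) * (t - a) * \<psi> t) = - integral S (\<lambda>t. \<phi> t * (b - 2 * t + a))"
proof -
  have spike: "negligible {t \<in> S - {a..b}. f t \<noteq> 0}" "negligible {t \<in> {a..b} - S. f t \<noteq> 0}"
    for f :: "real \<Rightarrow> real"
    by (rule negligible_subset[of "{a, b}"], simp, use S in force)+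
  have \<psi>_ab: "\<psi> absolutely_integrable_on {a..b}"
    using \<psi> absolutely_integrable_spike_set_eq[OF spike] by blast
  obtain M where M: "\<And>t. t \<in> {a<..<b} \<Longrightarrow> \<bar>\<phi> t\<bar> \<le> M"
    using bounded_antiderivative_on_interval[OF deriv \<psi>_ab] by blast
  define w where "w t = (b - t) * (t - a)" for t
  define F where "F t = w t * \<phi> t" for t
  have w_\<psi>: "((\<lambda>t. w t * \<psi> t) has_integral integral {a..b} (\<lambda>t. w t * \<psi> t)) {a..b}"
  proof -
    have "(\<lambda>t. w t * \<psi> t) absolutely_integrable_on {a..b}"
      unfolding w_def
      by (intro absolutely_integrable_bounded_measurable_product_real \<psi>_ab
          continuous_imp_measurable_on_sets_lebesgue compact_imp_bounded compact_continuous_image)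
        (auto intro!: continuous_intros)
    then show ?thesis by (simp add: absolutely_integrable_on_def integrable_integral)
  qed
  have F_deriv: "(F has_real_derivative \<phi> t * (b - 2 * t + a) + w t * \<psi> t) (at t)"
    if "t \<in> {a<..<b}" for t
    unfolding F_def w_def
    by (rule derivative_eq_intros deriv[OF that] refl | simp add: algebra_simps)+
  have F_vanishes: "(F \<longlongrightarrow> 0) (at_right a)" "(F \<longlongrightarrow> 0) (at_left b)"
  proof -
    \<comment> \<open>\<open>\<phi>\<close> is bounded because \<open>\<psi>\<close> is integrable up to the end points, and \<open>w\<close> vanishes there\<close>
    have bound: "\<forall>\<^sub>F t in F'. norm (F t) \<le> norm (w t) * M" if "\<forall>\<^sub>F t in F'. t \<in> {a<..<b}" for F'
      using that by eventually_elim (auto simp: F_def abs_mult M mult_left_mono)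
    have w0: "(w \<longlongrightarrow> 0) (at_right a)" "(w \<longlongrightarrow> 0) (at_left b)"
      unfolding w_def by (auto intro!: tendsto_eq_intros)
    have ev: "\<forall>\<^sub>F t in at_right a. t \<in> {a<..<b}" "\<forall>\<^sub>F t in at_left b. t \<in> {a<..<b}"
      using ab by (auto intro: eventually_at_rightI eventually_at_leftI)
    show "(F \<longlongrightarrow> 0) (at_right a)" by (rule tendsto_0_le[OF w0(1) bound[OF ev(1)]])
    show "(F \<longlongrightarrow> 0) (at_left b)" by (rule tendsto_0_le[OF w0(2) bound[OF ev(2)]])
  qed
  have "continuous_on {a..b} F"
  proof (rule continuous_on_IccI)
    show "(F \<longlongrightarrow> F a) (at_right a)" "(F \<longlongrightarrow> F b) (at_left b)"
      using F_vanishes by (simp_all add: F_def w_def)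
    show "F \<midarrow>t\<rightarrow> F t" if "a < t" "t < b" for t
      using F_deriv[of t] that by (auto dest: DERIV_isCont simp: isCont_def)
  qed (fact ab)
  then have "((\<lambda>t. \<phi> t * (b - 2 * t + a) + w t * \<psi> t) has_integral F b - F a) {a..b}"
    using ab F_deriv
    by (intro fundamental_theorem_of_calculus_interior)
      (auto simp: has_real_derivative_iff_has_vector_derivative[symmetric])
  from has_integral_diff[OF this w_\<psi>]
  have "((\<lambda>t. \<phi> t * (b - 2 * t + a)) has_integral - integral {a..b} (\<lambda>t. w t * \<psi> t)) {a..b}"
    by (simp add: F_def w_def)
  then have "integral {a..b} (\<lambda>t. w t * \<psi> t) = - integral {a..b} (\<lambda>t. \<phi> t * (b - 2 * t + a))"
    by (simp add: integral_unique)
  then show ?thesis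
    by (simp add: w_def integral_spike_set[OF spike])
qed

section \<open>The regions \<open>[0,1]^n_\<pi>\<close>\<close>

lemma mem_unit_cube: "x \<in> unit_cube \<longleftrightarrow> (\<forall>i. 0 \<le> x $ i \<and> x $ i \<le> 1)"
  by (simp add: unit_cube_def mem_box_cart)

lemma perm_region_less:
  "x \<in> perm_region \<pi> \<Longrightarrow> 1 \<le> p \<Longrightarrow> p < q \<Longrightarrow> q \<le> CARD('n) \<Longrightarrow> x $ \<pi> p < x $ (\<pi> q :: 'n::finite)"
  by (simp add: perm_region_def)

lemma perm_region_subset_unit_cube: "perm_region \<pi> \<subseteq> unit_cube"
  by (auto simp: perm_region_def)

lemma perm_region_iff_adjacent:
  "x \<in> perm_region \<pi> \<longleftrightarrow>
     x \<in> unit_cube \<and> (\<forall>p. 1 \<le> p \<longrightarrow> p < CARD('n) \<longrightarrow> x $ \<pi> p < x $ (\<pi> (Suc p) :: 'n::finite))"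
proof -
  have "q \<le> CARD('n) \<longrightarrow> x $ \<pi> p < x $ \<pi> q"
    if adj: "\<forall>p. 1 \<le> p \<longrightarrow> p < CARD('n) \<longrightarrow> x $ \<pi> p < x $ \<pi> (Suc p)"
      and "1 \<le> p" "Suc p \<le> q" for p q
    using \<open>Suc p \<le> q\<close>
  proof (induction q rule: dec_induct)
    case base
    show ?case using adj \<open>1 \<le> p\<close> by (simp add: Suc_le_eq)
  next
    case (step q)
    show ?case
    proof
      assume q: "Suc q \<le> CARD('n)"
      then have "x $ \<pi> p < x $ \<pi> q" using step.IH by simp
      also have "\<dots> < x $ \<pi> (Suc q)" using adj step.hyps(1) \<open>1 \<le> p\<close> q by (simp add: Suc_le_eq)
      finally show "x $ \<pi> p < x $ \<pi> (Suc q)" .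
    qed
  qed
  then show ?thesis unfolding perm_region_def by (auto simp: Suc_le_eq)
qed

lemma perm_region_lebesgue: "perm_region (\<pi> :: nat \<Rightarrow> 'n::finite) \<in> sets lebesgue"
proof -
  have "perm_region \<pi> = unit_cube \<inter> (\<Inter>p\<in>{1..CARD('n)}. \<Inter>q\<in>{p<..CARD('n)}. {x. x $ \<pi> p < x $ \<pi> q})"
    unfolding perm_region_def by auto
  moreover have "open (\<Inter>p\<in>{1..CARD('n)}. \<Inter>q\<in>{p<..CARD('n)}. {x :: real^'n. x $ \<pi> p < x $ \<pi> q})"
    by (intro open_INT finite_atLeastAtMost finite_greaterThanAtMost ballI open_Collect_less
        continuous_on_component continuous_on_id)
  ultimately have "perm_region \<pi> \<in> sets borel"
    by (simp add: unit_cube_def borel_open borel_closed sets.Int)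
  then show ?thesis by (intro sets_completionI_sets) simp
qed

lemma perms_inj_eq:
  assumes "\<pi> \<in> perms" "p \<in> {1..CARD('n)}" "q \<in> {1..CARD('n)}"
  shows "\<pi> p = (\<pi> q :: 'n::finite) \<longleftrightarrow> p = q"
  using assms by (auto simp: perms_def bij_betw_def dest: inj_onD)

lemma perms_surj:
  assumes "\<pi> \<in> perms"
  obtains p where "p \<in> {1..CARD('n)}" "i = (\<pi> p :: 'n::finite)"
proof -
  have "i \<in> \<pi> ` {1..CARD('n)}" using assms by (simp add: perms_def bij_betw_def)
  then show ?thesis using that by blast
qed

lemma sorted_coordinates_perm_region:
  assumes "\<pi> \<in> perms" "x \<in> perm_region (\<pi> :: nat \<Rightarrow> 'n::finite)"
  shows "sorted_list_of_multiset (image_mset (\<lambda>i. x $ i) (mset_set (UNIV :: 'n set)))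
      = map (\<lambda>m. x $ \<pi> m) [1..<CARD('n) + 1]"
proof -
  have "set [1..<CARD('n) + 1] = {1..CARD('n)}" by auto
  then have bij: "bij_betw \<pi> (set [1..<CARD('n) + 1]) UNIV"
    using assms(1) by (simp add: perms_def)
  then have "distinct (map \<pi> [1..<CARD('n) + 1])" "set (map \<pi> [1..<CARD('n) + 1]) = UNIV"
    by (simp_all add: distinct_map bij_betw_def del: upt_Suc)
  then have "mset_set (UNIV :: 'n set) = mset (map \<pi> [1..<CARD('n) + 1])"
    using mset_set_set by fastforce
  then have "image_mset (\<lambda>i. x $ i) (mset_set (UNIV :: 'n set)) = mset (map (\<lambda>m. x $ \<pi> m) [1..<CARD('n) + 1])"
    by (simp add: mset_map multiset.map_comp comp_def del: upt_Suc)
  moreover have "sorted (map (\<lambda>m. x $ \<pi> m) [1..<CARD('n) + 1])"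
    unfolding sorted_iff_nth_mono_less
    using perm_region_less[OF assms(2)] by (simp add: nth_upt less_imp_le del: upt_Suc)
  ultimately show ?thesis
    by (simp only: sorted_list_of_multiset_mset sorted_sort_id)
qed

lemma ord_stat_perm_region:
  assumes "\<pi> \<in> perms" "x \<in> perm_region (\<pi> :: nat \<Rightarrow> 'n::finite)" "m \<in> {1..CARD('n)}"
  shows "ord_stat x m = x $ \<pi> m"
proof -
  have "m - 1 < length [1..<CARD('n) + 1]" "[1..<CARD('n) + 1] ! (m - 1) = m"
    using assms(3) by (auto simp: nth_upt simp del: upt_Suc)
  then show ?thesis
    using assms(3) by (simp add: ord_stat_def sorted_coordinates_perm_region[OF assms(1,2)] del: upt_Suc)
qed

lemma perm_region_unique:
  assumes "\<pi> \<in> perms" "\<sigma> \<in> perms" "x \<in> perm_region \<pi>" "x \<in> perm_region \<sigma>" "m \<in> {1..CARD('n)}"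
  shows "\<pi> m = (\<sigma> m :: 'n::finite)"
proof -
  obtain p where p: "p \<in> {1..CARD('n)}" "\<sigma> m = \<pi> p" by (rule perms_surj[OF assms(1), of "\<sigma> m"])
  have "x $ \<pi> m = x $ \<pi> p"
    using ord_stat_perm_region[OF assms(1,3,5)] ord_stat_perm_region[OF assms(2,4,5)] p by simp
  then have "p = m"
    using perm_region_less[OF assms(3), of p m] perm_region_less[OF assms(3), of m p] p assms(5)
    by (cases p m rule: linorder_cases) auto
  then show ?thesis using p by simp
qed

lemma perm_region_cong:
  assumes "\<And>m. m \<in> {1..CARD('n)} \<Longrightarrow> \<pi> m = (\<sigma> m :: 'n::finite)"
  shows "perm_region \<pi> = perm_region \<sigma>"
proof -
  have "x $ \<pi> i < x $ \<pi> j \<longleftrightarrow> x $ \<sigma> i < x $ \<sigma> j"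
    if "1 \<le> i" "i < j" "j \<le> CARD('n)" for x :: "real^'n" and i j
    using assms[of i] assms[of j] that by simp
  then show ?thesis unfolding perm_region_def by blast
qed

lemma perm_regions_disjoint:
  assumes "\<pi> \<in> perms" "\<sigma> \<in> perms" "perm_region \<pi> \<noteq> perm_region (\<sigma> :: nat \<Rightarrow> 'n::finite)"
  shows "perm_region \<pi> \<inter> perm_region \<sigma> = {}"
  using assms perm_region_unique[OF assms(1,2)] perm_region_cong by blast

text \<open>The set \<open>perms\<close> itself is infinite, since its elements are arbitrary outside \<open>{1..n}\<close>.\<close>

lemma finite_perm_regions: "finite (perm_region ` (perms :: (nat \<Rightarrow> 'n::finite) set))"
proof (rule finite_subset)
  show "perm_region ` (perms :: (nat \<Rightarrow> 'n) set) \<subseteq> perm_region ` (\<Pi>\<^sub>E m\<in>{1..CARD('n)}. UNIV)"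
  proof
    fix R assume "R \<in> perm_region ` (perms :: (nat \<Rightarrow> 'n) set)"
    then obtain \<pi> where "R = perm_region \<pi>" by blast
    moreover have "perm_region \<pi> = perm_region (restrict \<pi> {1..CARD('n)})"
      by (rule perm_region_cong) simp
    ultimately show "R \<in> perm_region ` (\<Pi>\<^sub>E m\<in>{1..CARD('n)}. UNIV)" by auto
  qed
qed (simp add: finite_PiE)

lemma exists_perm_region:
  fixes x :: "real^'n::finite"
  assumes "x \<in> unit_cube" and distinct: "inj (\<lambda>i. x $ i)"
  obtains \<pi> where "\<pi> \<in> perms" "x \<in> perm_region \<pi>"
proof -
  define rank where "rank i = card {l. x $ l < x $ i} + 1" for i
  have rank_less: "rank i < rank i'" if "x $ i < x $ i'" for i i'
    unfolding rank_def using that by (auto intro!: psubset_card_mono)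
  have "inj rank"
  proof (rule injI)
    fix i i' assume "rank i = rank i'"
    moreover have "x $ i \<noteq> x $ i'" if "i \<noteq> i'" using distinct that by (auto dest: injD)
    ultimately show "i = i'" using rank_less[of i i'] rank_less[of i' i] by fastforce
  qed
  moreover have "range rank \<subseteq> {1..CARD('n)}"
  proof -
    have "card {l. x $ l < x $ i} < CARD('n)" for i
      by (rule psubset_card_mono) auto
    then show ?thesis by (auto simp: rank_def Suc_leI)
  qed
  ultimately have bij_rank: "bij_betw rank UNIV {1..CARD('n)}"
    by (simp add: bij_betw_def card_subset_eq card_image)
  define \<pi> where "\<pi> = the_inv_into UNIV rank"
  have \<pi>: "bij_betw \<pi> {1..CARD('n)} UNIV" "\<And>m. m \<in> {1..CARD('n)} \<Longrightarrow> rank (\<pi> m) = m"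
    using bij_rank by (auto simp: \<pi>_def bij_betw_the_inv_into f_the_inv_into_f_bij_betw)
  show ?thesis
  proof (rule that)
    show "\<pi> \<in> perms" using \<pi>(1) by (simp add: perms_def)
    have "x $ \<pi> p < x $ \<pi> q" if "1 \<le> p" "p < q" "q \<le> CARD('n)" for p q
    proof -
      have pq: "rank (\<pi> p) = p" "rank (\<pi> q) = q" using \<pi>(2) that by auto
      then have "x $ \<pi> p \<noteq> x $ \<pi> q" using distinct that by (auto dest: injD)
      moreover have "\<not> x $ \<pi> q < x $ \<pi> p" using rank_less[of "\<pi> q" "\<pi> p"] pq that by auto
      ultimately show ?thesis by linarith
    qed
    then show "x \<in> perm_region \<pi>" using assms(1) by (simp add: perm_region_def)
  qed
qed

lemma negligible_coordinate_diagonal: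
  assumes "i \<noteq> i'"
  shows "negligible {x :: real^'n. x $ i = x $ i'}"
proof -
  have "(axis i 1 - axis i' 1 :: real^'n) $ i = 1" using assms by (simp add: axis_def)
  then have "(axis i 1 - axis i' 1 :: real^'n) \<noteq> 0" by force
  then have "negligible {x :: real^'n. (axis i 1 - axis i' 1) \<bullet> x = 0}"
    by (intro negligible_hyperplane) simp
  then show ?thesis by (simp add: inner_diff_left inner_axis')
qed

lemma negligible_unit_cube_diff_union_regions:
  "negligible (unit_cube - (union_regions :: (real^'n::finite) set))"
proof (rule negligible_subset)
  let ?D = "(\<lambda>(i, i'). {x :: real^'n. x $ i = x $ i'}) ` {(i, i'). i \<noteq> i'}"
  show "negligible (\<Union>?D)"
    by (rule negligible_Union) (auto intro: negligible_coordinate_diagonal)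
  show "(unit_cube :: (real^'n) set) - union_regions \<subseteq> \<Union>?D"
  proof
    fix x :: "real^'n" assume x: "x \<in> unit_cube - union_regions"
    then have "\<not> inj (\<lambda>i. x $ i)"
      using exists_perm_region[of x] by (auto simp: union_regions_def)
    then show "x \<in> \<Union>?D" by (auto simp: inj_def)
  qed
qed

lemma has_integral_unit_cube_sum_perm_regions:
  fixes g :: "real^'n::finite \<Rightarrow> real"
  assumes "\<And>\<pi>. \<pi> \<in> perms \<Longrightarrow> g integrable_on perm_region \<pi>"
  shows "(g has_integral (\<Sum>R\<in>perm_region ` perms. integral R g)) unit_cube"
proof -
  have "(g has_integral (\<Sum>R\<in>perm_region ` perms. integral R g)) (\<Union>(perm_region ` perms))"
  proof (rule has_integral_Union[OF finite_perm_regions])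
    show "(g has_integral integral R g) R" if "R \<in> perm_region ` perms" for R
      using that assms by auto
    show "pairwise (\<lambda>R R'. negligible (R \<inter> R')) (perm_region ` (perms :: (nat \<Rightarrow> 'n) set))"
      unfolding pairwise_def by (metis image_iff negligible_empty perm_regions_disjoint)
  qed
  moreover have "negligible {x \<in> unit_cube - union_regions. g x \<noteq> 0}"
    by (rule negligible_subset[OF negligible_unit_cube_diff_union_regions]) auto
  moreover have "negligible {x \<in> union_regions - unit_cube. g x \<noteq> 0}"
    using perm_region_subset_unit_cube by (intro empty_imp_negligible) (auto simp: union_regions_def)
  ultimately show ?thesis
    unfolding union_regions_def[symmetric] using has_integral_spike_set_eq[of unit_cube union_regions g] by blast
qed

text \<open>On the region of \<open>\<pi>\<close>, the order statistics \<open>x_(k-1)\<close> and \<open>x_(k+1)\<close>; they do not depend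
  on the coordinate \<open>x_\<pi>(k)\<close>.\<close>

definition lower_neighbour :: "(nat \<Rightarrow> 'n::finite) \<Rightarrow> nat \<Rightarrow> real^'n \<Rightarrow> real" where
  "lower_neighbour \<pi> k y = (if k = 1 then 0 else y $ \<pi> (k - 1))"

definition upper_neighbour :: "(nat \<Rightarrow> 'n::finite) \<Rightarrow> nat \<Rightarrow> real^'n \<Rightarrow> real" where
  "upper_neighbour \<pi> k y = (if k = CARD('n) then 1 else y $ \<pi> (k + 1))"

lemma continuous_on_neighbours:
  fixes \<pi> :: "nat \<Rightarrow> 'n::finite"
  shows "continuous_on UNIV (lower_neighbour \<pi> k)" "continuous_on UNIV (upper_neighbour \<pi> k)"
  unfolding lower_neighbour_def upper_neighbour_def
  by (cases "k = 1", simp_all add: continuous_intros) (cases "k = CARD('n)", simp_all add: continuous_intros)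

definition influence_weight :: "nat \<Rightarrow> real^'n::finite \<Rightarrow> real" where
  "influence_weight k x = ord_stat x (k + 1) - 2 * ord_stat x k + ord_stat x (k - 1)"

context
  fixes \<pi> :: "nat \<Rightarrow> 'n::finite" and k :: nat
  assumes \<pi>: "\<pi> \<in> perms" and k: "1 \<le> k" "k \<le> CARD('n)"
begin

lemma perm_neq:
  "p \<in> {1..CARD('n)} \<Longrightarrow> p \<noteq> k \<Longrightarrow> \<pi> p \<noteq> \<pi> k"
  using perms_inj_eq[OF \<pi>, of p k] k by auto

lemma perm_pred_neq: "k \<noteq> 1 \<Longrightarrow> \<pi> (k - 1) \<noteq> \<pi> k"
  using k by (intro perm_neq) auto

lemma perm_succ_neq: "k \<noteq> CARD('n) \<Longrightarrow> \<pi> (Suc k) \<noteq> \<pi> k"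
  using k by (intro perm_neq) auto

lemma neighbours_vec_upd [simp]:
  "lower_neighbour \<pi> k (vec_upd y (\<pi> k) t) = lower_neighbour \<pi> k y"
  "upper_neighbour \<pi> k (vec_upd y (\<pi> k) t) = upper_neighbour \<pi> k y"
  using perm_pred_neq perm_succ_neq by (auto simp: lower_neighbour_def upper_neighbour_def)

lemma ord_stat_perm_region_neighbours:
  assumes "x \<in> perm_region \<pi>"
  shows "ord_stat x (k - 1) = lower_neighbour \<pi> k x" and "ord_stat x k = x $ \<pi> k"
    and "ord_stat x (k + 1) = upper_neighbour \<pi> k x"
  using ord_stat_perm_region[OF \<pi> assms, of "k - 1"] ord_stat_perm_region[OF \<pi> assms, of k]
    ord_stat_perm_region[OF \<pi> assms, of "k + 1"] k
  by (auto simp: lower_neighbour_def upper_neighbour_def ord_stat_def)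

lemma perm_region_section_bounds:
  assumes "vec_upd y (\<pi> k) t \<in> perm_region \<pi>"
  shows "lower_neighbour \<pi> k y \<le> t" "t \<le> upper_neighbour \<pi> k y"
    and "lower_neighbour \<pi> k y < upper_neighbour \<pi> k y"
proof -
  let ?x = "vec_upd y (\<pi> k) t"
  have t01: "0 \<le> t" "t \<le> 1"
    using assms perm_region_subset_unit_cube by (force simp: mem_unit_cube dest!: spec[of _ "\<pi> k"])+
  have lower: "k \<noteq> 1 \<Longrightarrow> lower_neighbour \<pi> k y < t"
    using perm_region_less[OF assms, of "k - 1" k] perm_pred_neq k by (simp add: lower_neighbour_def)
  have upper: "k \<noteq> CARD('n) \<Longrightarrow> t < upper_neighbour \<pi> k y"
    using perm_region_less[OF assms, of k "k + 1"] perm_succ_neq k by (simp add: upper_neighbour_def)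
  show "lower_neighbour \<pi> k y \<le> t" "t \<le> upper_neighbour \<pi> k y"
    using lower upper t01 by (auto simp: lower_neighbour_def upper_neighbour_def)
  show "lower_neighbour \<pi> k y < upper_neighbour \<pi> k y"
    using lower upper t01 by (cases "k = 1"; cases "k = CARD('n)") (auto simp: lower_neighbour_def upper_neighbour_def)
qed

lemma perm_region_section_interval:
  assumes t0: "vec_upd y (\<pi> k) t0 \<in> perm_region \<pi>"
    and t: "lower_neighbour \<pi> k y < t" "t < upper_neighbour \<pi> k y"
  shows "vec_upd y (\<pi> k) t \<in> perm_region \<pi>"
proof -
  let ?z = "vec_upd y (\<pi> k) t0" and ?x = "vec_upd y (\<pi> k) t"
  have z: "?z \<in> unit_cube" "\<And>p. 1 \<le> p \<Longrightarrow> p < CARD('n) \<Longrightarrow> ?z $ \<pi> p < ?z $ \<pi> (Suc p)"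
    using t0 by (auto simp: perm_region_iff_adjacent)
  have lo: "0 \<le> lower_neighbour \<pi> k y"
    using z(1) perm_pred_neq by (auto simp: mem_unit_cube lower_neighbour_def dest: spec[of _ "\<pi> (k - 1)"])
  have hi: "upper_neighbour \<pi> k y \<le> 1"
    using z(1) perm_succ_neq by (auto simp: mem_unit_cube upper_neighbour_def dest: spec[of _ "\<pi> (Suc k)"])
  have "0 \<le> ?x $ i \<and> ?x $ i \<le> 1" for i
    using z(1) lo hi t by (cases "i = \<pi> k") (auto simp: mem_unit_cube dest: spec[of _ i])
  then have "?x \<in> unit_cube" by (simp only: mem_unit_cube) blast
  moreover have "?x $ \<pi> p < ?x $ \<pi> (Suc p)" if p: "1 \<le> p" "p < CARD('n)" for p
  proof -
    consider "Suc p = k" | "p = k" | "Suc p \<noteq> k" "p \<noteq> k" by blast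
    then show ?thesis
    proof cases
      case 1
      then show ?thesis using t(1) perm_pred_neq p by (auto simp: lower_neighbour_def)
    next
      case 2
      then show ?thesis using t(2) perm_succ_neq p by (auto simp: upper_neighbour_def)
    next
      case 3
      then show ?thesis
        using z(2)[OF p] perm_neq[of p] perm_neq[of "Suc p"] p by simp
    qed
  qed
  ultimately show ?thesis by (simp add: perm_region_iff_adjacent)
qed

lemma has_real_derivative_dir_deriv:
  fixes f :: "real^'n \<Rightarrow> real"
  assumes x: "x \<in> perm_region \<pi>" and de: "dir_deriv_exists f k"
    and line: "0 \<in> interior {s. x + s *\<^sub>R axis (\<pi> k) 1 \<in> perm_region \<pi>}"
  shows "((\<lambda>s. f (x + s *\<^sub>R axis (\<pi> k) 1)) has_real_derivative dir_deriv f k x) (at 0)"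
proof -
  have two_sided: "((\<lambda>s. f (x + s *\<^sub>R axis (\<pi> k) 1)) has_real_derivative d) (at 0)"
    if "has_partial_within f (perm_region \<pi>) (\<pi> k) x d" for d
    using that at_within_interior[OF line] by (simp add: has_partial_within_def)
  obtain d where d: "has_partial_within f (perm_region \<pi>) (\<pi> k) x d"
    using de \<pi> x by (auto simp: dir_deriv_exists_def)
  have "dir_deriv f k x = d"
    unfolding dir_deriv_def
  proof (rule the_equality)
    show "\<exists>\<pi>\<in>perms. x \<in> perm_region \<pi> \<and> has_partial_within f (perm_region \<pi>) (\<pi> k) x d"
      using \<pi> x d by blast
  next
    fix d' assume "\<exists>\<sigma>\<in>perms. x \<in> perm_region \<sigma> \<and> has_partial_within f (perm_region \<sigma>) (\<sigma> k) x d'"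
    then obtain \<sigma> where \<sigma>: "\<sigma> \<in> perms" "x \<in> perm_region \<sigma>" "has_partial_within f (perm_region \<sigma>) (\<sigma> k) x d'"
      by blast
    have agree: "\<sigma> m = \<pi> m" if "m \<in> {1..CARD('n)}" for m
      using perm_region_unique[OF \<sigma>(1) \<pi> \<sigma>(2) x that] .
    have "perm_region \<sigma> = perm_region \<pi>" using agree by (rule perm_region_cong)
    moreover have "\<sigma> k = \<pi> k" using agree k by simp
    ultimately show "d' = d"
      using \<sigma>(3) two_sided d DERIV_unique by metis
  qed
  then show ?thesis using two_sided[OF d] by simp
qed

lemma weights_on_perm_region:
  assumes "x \<in> perm_region \<pi>"
  shows "influence_weight k x = upper_neighbour \<pi> k x - 2 * x $ \<pi> k + lower_neighbour \<pi> k x"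
    and "h_weight k x = (real CARD('n) + 1) * (real CARD('n) + 2) *
      (upper_neighbour \<pi> k x - x $ \<pi> k) * (x $ \<pi> k - lower_neighbour \<pi> k x)"
  using ord_stat_perm_region_neighbours[OF assms]
  by (simp_all add: influence_weight_def h_weight_def)

lemma section_integral_by_parts:
  fixes f :: "real^'n \<Rightarrow> real" and y :: "real^'n"
  defines "line \<equiv> vec_upd y (\<pi> k)" and "sec \<equiv> {t. vec_upd y (\<pi> k) t \<in> perm_region \<pi>}"
  assumes de: "dir_deriv_exists f k"
    and D: "(\<lambda>t. dir_deriv f k (line t)) absolutely_integrable_on sec"
  shows "integral sec (\<lambda>t. h_weight k (line t) * dir_deriv f k (line t)) =
    - ((real CARD('n) + 1) * (real CARD('n) + 2)) * integral sec (\<lambda>t. f (line t) * influence_weight k (line t))"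
proof (cases "sec = {}")
  case False
  then obtain t0 where t0: "line t0 \<in> perm_region \<pi>" by (auto simp: sec_def line_def)
  define a where "a = lower_neighbour \<pi> k y"
  define b where "b = upper_neighbour \<pi> k y"
  have ab: "a < b" and sec_sub: "sec \<subseteq> {a..b}"
    using perm_region_section_bounds t0 by (auto simp: a_def b_def sec_def line_def)
  have sec_sup: "{a<..<b} \<subseteq> sec"
    using perm_region_section_interval t0 by (auto simp: a_def b_def sec_def line_def)
  have weights: "influence_weight k (line t) = b - 2 * t + a"
    "h_weight k (line t) = (real CARD('n) + 1) * (real CARD('n) + 2) * ((b - t) * (t - a))"
    if "t \<in> sec" for t
    using weights_on_perm_region[of "line t"] that
    by (simp_all add: a_def b_def sec_def line_def neighbours_vec_upd)
  have deriv: "((\<lambda>t. f (line t)) has_real_derivative dir_deriv f k (line t)) (at t)"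
    if t: "t \<in> {a<..<b}" for t
  proof -
    have "{a - t<..<b - t} \<subseteq> {s. line t + s *\<^sub>R axis (\<pi> k) 1 \<in> perm_region \<pi>}"
      using sec_sup by (force simp: line_def vec_upd_add_axis sec_def)
    then have "{a - t<..<b - t} \<subseteq> interior {s. line t + s *\<^sub>R axis (\<pi> k) 1 \<in> perm_region \<pi>}"
      by (rule interior_maximal) simp
    then have "0 \<in> interior {s. line t + s *\<^sub>R axis (\<pi> k) 1 \<in> perm_region \<pi>}"
      using t by auto
    from has_real_derivative_dir_deriv[OF _ de this] sec_sup t
    have "((\<lambda>s. f (line (s + t))) has_real_derivative dir_deriv f k (line t)) (at 0)"
      by (auto simp: line_def vec_upd_add_axis sec_def add.commute)
    then show ?thesis using DERIV_shift[of "\<lambda>t. f (line t)" _ 0 t] by simp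
  qed
  have "integral sec (\<lambda>t. h_weight k (line t) * dir_deriv f k (line t)) =
      (real CARD('n) + 1) * (real CARD('n) + 2) * integral sec (\<lambda>t. (b - t) * (t - a) * dir_deriv f k (line t))"
    by (simp add: weights mult.assoc cong: integral_cong)
  also have "\<dots> = - ((real CARD('n) + 1) * (real CARD('n) + 2)) * integral sec (\<lambda>t. f (line t) * (b - 2 * t + a))"
    by (simp only: integral_by_parts_quadratic_weight[OF ab sec_sup sec_sub deriv D] mult_minus_right mult_minus_left)
  also have "\<dots> = - ((real CARD('n) + 1) * (real CARD('n) + 2)) * integral sec (\<lambda>t. f (line t) * influence_weight k (line t))"
    by (simp add: weights cong: integral_cong)
  finally show ?thesis .
qed simp

lemma absolutely_integrable_on_perm_region_weighted:
  fixes g :: "real^'n \<Rightarrow> real"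
  assumes g: "g absolutely_integrable_on perm_region \<pi>"
  shows "(\<lambda>x. g x * influence_weight k x) absolutely_integrable_on perm_region \<pi>"
    and "(\<lambda>x. h_weight k x * g x) absolutely_integrable_on perm_region \<pi>"
proof -
  have mult: "(\<lambda>x. w x * g x) absolutely_integrable_on perm_region \<pi>" if "continuous_on UNIV w" for w
    using that perm_region_subset_unit_cube perm_region_lebesgue g
    by (intro absolutely_integrable_continuous_mult[where K = unit_cube])
      (auto simp: unit_cube_def intro: continuous_on_subset)
  have "(\<lambda>x. (upper_neighbour \<pi> k x - 2 * x $ \<pi> k + lower_neighbour \<pi> k x) * g x)
      absolutely_integrable_on perm_region \<pi>"
    by (intro mult continuous_intros continuous_on_neighbours)
  then show "(\<lambda>x. g x * influence_weight k x) absolutely_integrable_on perm_region \<pi>"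
    by (rule rev_iffD1[OF _ set_integrable_cong]) (simp_all add: weights_on_perm_region)
  have "(\<lambda>x. (real CARD('n) + 1) * (real CARD('n) + 2) *
      (upper_neighbour \<pi> k x - x $ \<pi> k) * (x $ \<pi> k - lower_neighbour \<pi> k x) * g x)
      absolutely_integrable_on perm_region \<pi>"
    by (intro mult continuous_intros continuous_on_neighbours)
  then show "(\<lambda>x. h_weight k x * g x) absolutely_integrable_on perm_region \<pi>"
    by (rule rev_iffD1[OF _ set_integrable_cong]) (simp_all add: weights_on_perm_region)
qed

lemma integral_perm_region_by_parts:
  fixes f :: "real^'n \<Rightarrow> real"
  assumes f: "f absolutely_integrable_on perm_region \<pi>" and de: "dir_deriv_exists f k"
    and D: "dir_deriv f k absolutely_integrable_on perm_region \<pi>"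
  shows "integral (perm_region \<pi>) (\<lambda>x. h_weight k x * dir_deriv f k x) =
    - ((real CARD('n) + 1) * (real CARD('n) + 2)) * integral (perm_region \<pi>) (\<lambda>x. f x * influence_weight k x)"
proof -
  let ?c = "(real CARD('n) + 1) * (real CARD('n) + 2)" and ?R = "perm_region \<pi>"
  let ?line = "\<lambda>y. vec_upd y (\<pi> k)" and ?sec = "\<lambda>y. {t. vec_upd y (\<pi> k) t \<in> perm_region \<pi>}"
  obtain G1 where G1: "integrable (hyperplane_measure (\<pi> k)) G1"
      "integral ?R (\<lambda>x. f x * influence_weight k x) = integral\<^sup>L (hyperplane_measure (\<pi> k)) G1"
      "AE y in hyperplane_measure (\<pi> k).
        (\<lambda>t. f (?line y t) * influence_weight k (?line y t)) absolutely_integrable_on ?sec y \<and>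
        G1 y = integral (?sec y) (\<lambda>t. f (?line y t) * influence_weight k (?line y t))"
    by (rule integral_along_coordinate_lines[OF absolutely_integrable_on_perm_region_weighted(1)[OF f]])
  obtain G2 where G2: "integrable (hyperplane_measure (\<pi> k)) G2"
      "integral ?R (\<lambda>x. h_weight k x * dir_deriv f k x) = integral\<^sup>L (hyperplane_measure (\<pi> k)) G2"
      "AE y in hyperplane_measure (\<pi> k).
        (\<lambda>t. h_weight k (?line y t) * dir_deriv f k (?line y t)) absolutely_integrable_on ?sec y \<and>
        G2 y = integral (?sec y) (\<lambda>t. h_weight k (?line y t) * dir_deriv f k (?line y t))"
    by (rule integral_along_coordinate_lines[OF absolutely_integrable_on_perm_region_weighted(2)[OF D]])
  have "AE y in hyperplane_measure (\<pi> k). G2 y = - ?c * G1 y"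
    using AE_absolutely_integrable_on_coordinate_lines[OF D] G1(3) G2(3)
    by eventually_elim (simp add: section_integral_by_parts[OF de])
  then have "integral\<^sup>L (hyperplane_measure (\<pi> k)) G2 = integral\<^sup>L (hyperplane_measure (\<pi> k)) (\<lambda>y. - ?c * G1 y)"
    using G1(1) G2(1) by (intro integral_cong_AE) auto
  then show ?thesis using G1(2) G2(2) by simp
qed

end

theorem proposition7:
  fixes f :: "real^'n::finite \<Rightarrow> real" and k :: nat
  assumes "1 \<le> k" and "k \<le> CARD('n)"
    and "f measurable_on unit_cube"
    and "(\<lambda>x. (f x)\<^sup>2) integrable_on unit_cube"
    and "dir_deriv_exists f k"
    and "continuous_on union_regions (dir_deriv f k)"
    and "dir_deriv f k absolutely_integrable_on union_regions"
  shows "influence f k = integral unit_cube (\<lambda>x. h_weight k x * dir_deriv f k x)"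
proof -
  let ?c = "(real CARD('n) + 1) * (real CARD('n) + 2)"
  have f: "f absolutely_integrable_on unit_cube"
    using assms(3,4) by (intro absolutely_integrable_if_square_integrable) (simp_all add: unit_cube_def)
  have on_region: "f absolutely_integrable_on perm_region \<pi>" "dir_deriv f k absolutely_integrable_on perm_region \<pi>"
    if "\<pi> \<in> perms" for \<pi>
    using set_integrable_subset[OF f perm_region_lebesgue perm_region_subset_unit_cube]
      set_integrable_subset[OF assms(7) perm_region_lebesgue] that
    by (auto simp: union_regions_def)
  note weighted = absolutely_integrable_on_perm_region_weighted[OF _ assms(1,2)]
  have "influence f k = - ?c * integral unit_cube (\<lambda>x. f x * influence_weight k x)"
    unfolding influence_def influence_weight_def by (simp only: minus_mult_left)
  also have "\<dots> = - ?c * (\<Sum>R\<in>perm_region ` perms. integral R (\<lambda>x. f x * influence_weight k x))"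
    using weighted(1)[OF _ on_region(1)]
    by (simp add: integral_unique[OF has_integral_unit_cube_sum_perm_regions] set_lebesgue_integral_eq_integral)
  also have "\<dots> = (\<Sum>R\<in>perm_region ` perms. integral R (\<lambda>x. h_weight k x * dir_deriv f k x))"
    unfolding sum_distrib_left
    by (intro sum.cong) (auto simp: integral_perm_region_by_parts[OF _ assms(1,2) on_region(1) assms(5) on_region(2)])
  also have "\<dots> = integral unit_cube (\<lambda>x. h_weight k x * dir_deriv f k x)"
    using weighted(2)[OF _ on_region(2)]
    by (simp add: integral_unique[OF has_integral_unit_cube_sum_perm_regions] set_lebesgue_integral_eq_integral)
  finally show ?thesis .
qed

end
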